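(* In the MHAV setting described in the context, with $Y$, $f$, $\Lambda$ and $\phi_Y$ fixed, the set of paths of positive probability under $\bar P_{\mathrm{MH}}$ is the same for all parameter values $\alpha'\in(0,1)$ and $\alpha,\beta\in(0,1)$ with $\alpha+\beta<1$.
   Context: MHAV setting: $Y$ is a finite nonempty set, $f:Y\to\mathbb{R}$; $\Lambda=\{\lambda_1<\dots<\lambda_n\}$ positive reals, $n\ge2$; $\bar\Pi(\lambda,y)=\lambda^{-f(y)}/Z$ on $\Lambda\times Y$, $Z=\sum_{\lambda,y}\lambda^{-f(y)}$. $\phi_Y$ is an irreducible Markov kernel on $Y$. For $\alpha'\in(0,1)$: $\phi_\Lambda(\lambda_1,\lambda_2)=1$, $\phi_\Lambda(\lambda_n,\lambda_{n-1})=1$, and for $1<i<n$, $\phi_\Lambda(\lambda_i,\lambda_{i+1})=\alpha'$, $\phi_\Lambda(\lambda_i,\lambda_{i-1})=1-\alpha'$, other entries $0$. $\bar\phi[(\lambda,y),(\lambda',y')]=\alpha\phi_\Lambda(\lambda,\lambda')$ if $\lambda\ne\lambda',y=y'$; $\beta\phi_Y(y,y')$ if $\lambda=\lambda',y\ne y'$; $(1-\alpha-\beta)+\beta\phi_Y(y,y)$ if $(\lambda,y)=(\lambda',y')$; $0$ otherwise. $\bar{\mathsf{Acc}}(x,x')=\min\{1,\frac{\bar\phi(x',x)\bar\Pi(x')}{\bar\phi(x,x')\bar\Pi(x)}\}$; $\bar P_{\mathrm{MH}}(x,x')=\bar\phi(x,x')\bar{\mathsf{Acc}}(x,x')$ for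 $x\ne x'$, $\bar P_{\mathrm{MH}}(x,x)=1-\sum_{x'\ne x}\bar P_{\mathrm{MH}}(x,x')$. A path is a finite sequence $x_0,x_1,\dots,x_m$ in $\Lambda\times Y$; its probability is $\prod_{i=0}^{m-1}\bar P_{\mathrm{MH}}(x_i,x_{i+1})$. *)

theory Defs
  imports Complex_Main
begin

text \<open>The temperature ladder is given by an index function lam with
  Lambda = lam ` {1..n}, lam 1 < ... < lam n.\<close>

definition Lam :: "(nat \<Rightarrow> real) \<Rightarrow> nat \<Rightarrow> real set" where
  "Lam lam n = lam ` {1..n}"

definition states :: "'y set \<Rightarrow> (nat \<Rightarrow> real) \<Rightarrow> nat \<Rightarrow> (real \<times> 'y) set" where
  "states Y lam n = Lam lam n \<times> Y"

definition irreducible_kernel :: "'y set \<Rightarrow> ('y \<Rightarrow> 'y \<Rightarrow> real) \<Rightarrow> bool" where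
  "irreducible_kernel Y phi \<longleftrightarrow>
     (\<forall>y\<in>Y. \<forall>y'\<in>Y. phi y y' \<ge> 0) \<and>
     (\<forall>y\<in>Y. (\<Sum>y'\<in>Y. phi y y') = 1) \<and>
     (\<forall>y\<in>Y. \<forall>y'\<in>Y. (y, y') \<in> {(u, v). u \<in> Y \<and> v \<in> Y \<and> phi u v > 0}\<^sup>*)"

definition phiLam :: "(nat \<Rightarrow> real) \<Rightarrow> nat \<Rightarrow> real \<Rightarrow> real \<Rightarrow> real \<Rightarrow> real" where
  "phiLam lam n alpha' a b =
     (if a = lam 1 \<and> b = lam 2 then 1
      else if a = lam n \<and> b = lam (n - 1) then 1
      else if (\<exists>i. 1 < i \<and> i < n \<and> a = lam i \<and> b = lam (i + 1)) then alpha'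
      else if (\<exists>i. 1 < i \<and> i < n \<and> a = lam i \<and> b = lam (i - 1)) then 1 - alpha'
      else 0)"

definition phiBar ::
  "(nat \<Rightarrow> real) \<Rightarrow> nat \<Rightarrow> ('y \<Rightarrow> 'y \<Rightarrow> real) \<Rightarrow> real \<Rightarrow> real \<Rightarrow> real
   \<Rightarrow> real \<times> 'y \<Rightarrow> real \<times> 'y \<Rightarrow> real" where
  "phiBar lam n phiY alpha' alpha beta x x' =
     (let (a, y) = x; (a', y') = x' in
      if a \<noteq> a' \<and> y = y' then alpha * phiLam lam n alpha' a a'
      else if a = a' \<and> y \<noteq> y' then beta * phiY y y'
      else if a = a' \<and> y = y' then (1 - alpha - beta) + beta * phiY y y
      else 0)"

definition Zc :: "'y set \<Rightarrow> ('y \<Rightarrow> real) \<Rightarrow> (nat \<Rightarrow> real) \<Rightarrow> nat \<Rightarrow> real" where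
  "Zc Y f lam n = (\<Sum>(a, y)\<in>states Y lam n. a powr (- f y))"

definition PiBar :: "'y set \<Rightarrow> ('y \<Rightarrow> real) \<Rightarrow> (nat \<Rightarrow> real) \<Rightarrow> nat \<Rightarrow> real \<times> 'y \<Rightarrow> real" where
  "PiBar Y f lam n x = (case x of (a, y) \<Rightarrow> a powr (- f y) / Zc Y f lam n)"

definition AccBar ::
  "'y set \<Rightarrow> ('y \<Rightarrow> real) \<Rightarrow> (nat \<Rightarrow> real) \<Rightarrow> nat \<Rightarrow> ('y \<Rightarrow> 'y \<Rightarrow> real) \<Rightarrow> real \<Rightarrow> real \<Rightarrow> real
   \<Rightarrow> real \<times> 'y \<Rightarrow> real \<times> 'y \<Rightarrow> real" where
  "AccBar Y f lam n phiY alpha' alpha beta x x' =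
     min 1 ((phiBar lam n phiY alpha' alpha beta x' x * PiBar Y f lam n x') /
            (phiBar lam n phiY alpha' alpha beta x x' * PiBar Y f lam n x))"

definition PMH ::
  "'y set \<Rightarrow> ('y \<Rightarrow> real) \<Rightarrow> (nat \<Rightarrow> real) \<Rightarrow> nat \<Rightarrow> ('y \<Rightarrow> 'y \<Rightarrow> real) \<Rightarrow> real \<Rightarrow> real \<Rightarrow> real
   \<Rightarrow> real \<times> 'y \<Rightarrow> real \<times> 'y \<Rightarrow> real" where
  "PMH Y f lam n phiY alpha' alpha beta x x' =
     (if x \<noteq> x' then phiBar lam n phiY alpha' alpha beta x x' * AccBar Y f lam n phiY alpha' alpha beta x x'
      else 1 - (\<Sum>z\<in>states Y lam n - {x}.
                  phiBar lam n phiY alpha' alpha beta x z * AccBar Y f lam n phiY alpha' alpha beta x z))"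

definition path_prob ::
  "'y set \<Rightarrow> ('y \<Rightarrow> real) \<Rightarrow> (nat \<Rightarrow> real) \<Rightarrow> nat \<Rightarrow> ('y \<Rightarrow> 'y \<Rightarrow> real) \<Rightarrow> real \<Rightarrow> real \<Rightarrow> real
   \<Rightarrow> (real \<times> 'y) list \<Rightarrow> real" where
  "path_prob Y f lam n phiY alpha' alpha beta xs =
     prod_list (map (\<lambda>(x, x'). PMH Y f lam n phiY alpha' alpha beta x x') (zip xs (tl xs)))"

definition pos_paths ::
  "'y set \<Rightarrow> ('y \<Rightarrow> real) \<Rightarrow> (nat \<Rightarrow> real) \<Rightarrow> nat \<Rightarrow> ('y \<Rightarrow> 'y \<Rightarrow> real) \<Rightarrow> real \<Rightarrow> real \<Rightarrow> real
   \<Rightarrow> (real \<times> 'y) list set" where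
  "pos_paths Y f lam n phiY alpha' alpha beta =
     {xs. xs \<noteq> [] \<and> set xs \<subseteq> states Y lam n \<and> path_prob Y f lam n phiY alpha' alpha beta xs > 0}"

definition valid_params :: "real \<Rightarrow> real \<Rightarrow> real \<Rightarrow> bool" where
  "valid_params alpha' alpha beta \<longleftrightarrow>
     0 < alpha' \<and> alpha' < 1 \<and> 0 < alpha \<and> alpha < 1 \<and> 0 < beta \<and> beta < 1 \<and> alpha + beta < 1"

end

theory Submission
  imports Defs
begin

text \<open>Since the target distribution is strictly positive, an off-diagonal Metropolis--Hastings
  step from x to x' has positive probability exactly when both proposals, x to x' and x' to x,
  have positive probability. For the product proposal this depends only on the supports of the
  ladder kernel and of phiY, not on alpha', alpha, beta. A step that stays put always has positive
  probability, because the proposal mass leaving a state is at most alpha + beta < 1. So positivity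
  of a path is one and the same parameter-free condition on its consecutive states.\<close>

definition ladder_adj :: "(nat \<Rightarrow> real) \<Rightarrow> nat \<Rightarrow> real \<Rightarrow> real \<Rightarrow> bool" where
  "ladder_adj lam n a b \<longleftrightarrow> (a = lam 1 \<and> b = lam 2) \<or> (a = lam n \<and> b = lam (n - 1)) \<or>
     (\<exists>i. 1 < i \<and> i < n \<and> a = lam i \<and> (b = lam (i + 1) \<or> b = lam (i - 1)))"

lemma phiLam_nonneg: "0 \<le> p \<Longrightarrow> p \<le> 1 \<Longrightarrow> 0 \<le> phiLam lam n p a b"
  unfolding phiLam_def by auto

lemma phiLam_pos_iff: "0 < p \<Longrightarrow> p < 1 \<Longrightarrow> 0 < phiLam lam n p a b \<longleftrightarrow> ladder_adj lam n a b"
  unfolding phiLam_def ladder_adj_def by auto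

lemma sum_le_two_point_masses:
  fixes g :: "'a \<Rightarrow> real"
  assumes "finite B" "0 \<le> u" "0 \<le> v"
    and "\<And>b. b \<in> B \<Longrightarrow> g b \<le> (if b = c then u else 0) + (if b = d then v else 0)"
  shows "sum g B \<le> u + v"
proof -
  have "sum g B \<le> (\<Sum>b\<in>B. (if b = c then u else 0) + (if b = d then v else 0))"
    using assms(4) by (rule sum_mono)
  also have "\<dots> = (if c \<in> B then u else 0) + (if d \<in> B then v else 0)"
    using assms(1) by (simp add: sum.distrib)
  also have "\<dots> \<le> u + v"
    using assms(2,3) by auto
  finally show ?thesis .
qed

lemma phiLam_row:
  assumes "inj_on lam {1..n}" "2 \<le> n" "i \<in> {1..n}"
  shows "phiLam lam n p (lam i) b =
    (if i = 1 then (if b = lam 2 then 1 else 0)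
     else if i = n then (if b = lam (n - 1) then 1 else 0)
     else if b = lam (i + 1) then p else if b = lam (i - 1) then 1 - p else 0)"
proof -
  have lam_eq: "lam i = lam j \<longleftrightarrow> i = j" if "j \<in> {1..n}" for j
    using assms(1,3) that by (auto dest: inj_onD)
  have ex: "(\<exists>j. 1 < j \<and> j < n \<and> lam i = lam j \<and> P j) \<longleftrightarrow> 1 < i \<and> i < n \<and> P i" for P
    using lam_eq by (metis atLeastAtMost_iff less_imp_le_nat)
  show ?thesis
    unfolding phiLam_def ex using assms(2,3) lam_eq[of 1] lam_eq[of n] by auto
qed

lemma phiLam_row_sum_le_1:
  assumes "finite B" "inj_on lam {1..n}" "2 \<le> n" "a \<in> Lam lam n" "0 \<le> p" "p \<le> 1"
  shows "(\<Sum>b\<in>B. phiLam lam n p a b) \<le> 1"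
proof -
  obtain i where i: "i \<in> {1..n}" "a = lam i"
    using assms(4) unfolding Lam_def by auto
  define u where "u = (if i = 1 then 1 else if i = n then 0 else p)"
  have "0 \<le> u" "0 \<le> 1 - u"
    using assms(5,6) by (auto simp: u_def)
  moreover have "phiLam lam n p a b \<le>
      (if b = lam (i + 1) then u else 0) + (if b = lam (i - 1) then 1 - u else 0)" for b
  proof -
    consider "i = 1" | "i \<noteq> 1" "i = n" | "i \<noteq> 1" "i \<noteq> n"
      by blast
    then show ?thesis
      unfolding i(2) phiLam_row[OF assms(2,3) i(1)] u_def
      by cases (use assms(5,6) in \<open>auto simp: numeral_2_eq_2\<close>)
  qed
  ultimately have "(\<Sum>b\<in>B. phiLam lam n p a b) \<le> u + (1 - u)"
    by (rule sum_le_two_point_masses[OF assms(1)])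
  then show ?thesis by simp
qed

lemma phiBar_Pair:
  "phiBar lam n phiY p al be (a, y) (a', y') =
    (if a \<noteq> a' \<and> y = y' then al * phiLam lam n p a a'
     else if a = a' \<and> y \<noteq> y' then be * phiY y y'
     else if a = a' \<and> y = y' then (1 - al - be) + be * phiY y y else 0)"
  unfolding phiBar_def by simp

lemma irreducible_kernel_nonneg:
  "irreducible_kernel Y phiY \<Longrightarrow> y \<in> Y \<Longrightarrow> y' \<in> Y \<Longrightarrow> 0 \<le> phiY y y'"
  unfolding irreducible_kernel_def by blast

lemma irreducible_kernel_row_sum:
  "irreducible_kernel Y phiY \<Longrightarrow> y \<in> Y \<Longrightarrow> (\<Sum>y'\<in>Y. phiY y y') = 1"
  unfolding irreducible_kernel_def by blast

lemma phiBar_nonneg: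
  assumes "valid_params p al be" "irreducible_kernel Y phiY" "snd x \<in> Y" "snd x' \<in> Y"
  shows "0 \<le> phiBar lam n phiY p al be x x'"
  using assms phiLam_nonneg[of p lam n "fst x" "fst x'"] irreducible_kernel_nonneg[OF assms(2)]
  by (cases x, cases x') (auto simp: phiBar_Pair valid_params_def)

definition proposal_adj :: "(nat \<Rightarrow> real) \<Rightarrow> nat \<Rightarrow> ('y \<Rightarrow> 'y \<Rightarrow> real) \<Rightarrow> real \<times> 'y \<Rightarrow> real \<times> 'y \<Rightarrow> bool" where
  "proposal_adj lam n phiY x x' \<longleftrightarrow>
     (snd x = snd x' \<and> fst x \<noteq> fst x' \<and> ladder_adj lam n (fst x) (fst x')) \<or>
     (fst x = fst x' \<and> snd x \<noteq> snd x' \<and> 0 < phiY (snd x) (snd x'))"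

lemma phiBar_pos_iff:
  assumes "valid_params p al be" "x \<noteq> x'"
  shows "0 < phiBar lam n phiY p al be x x' \<longleftrightarrow> proposal_adj lam n phiY x x'"
  using assms phiLam_pos_iff[of p lam n "fst x" "fst x'"]
  by (cases x, cases x') (auto simp: phiBar_Pair proposal_adj_def valid_params_def zero_less_mult_iff)

lemma phiBar_row_sum_off_diag_le:
  assumes "finite Y" "inj_on lam {1..n}" "2 \<le> n"
    and "valid_params p al be" "irreducible_kernel Y phiY" "x \<in> states Y lam n"
  shows "(\<Sum>z\<in>states Y lam n - {x}. phiBar lam n phiY p al be x z) \<le> al + be"
proof -
  obtain a y where x: "x = (a, y)" "a \<in> Lam lam n" "y \<in> Y"
    using assms(6) unfolding states_def by auto
  have par: "0 < al" "0 < be" "0 \<le> p" "p \<le> 1"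
    using assms(4) by (auto simp: valid_params_def)
  \<comment> \<open>g dominates phiBar x off the diagonal and its total mass is at most al + be\<close>
  define g where "g z = (if snd z = y then al * phiLam lam n p a (fst z) else 0)
    + (if fst z = a then be * phiY y (snd z) else 0)" for z
  have finL: "finite (Lam lam n)" unfolding Lam_def by simp
  have g_nonneg: "0 \<le> g z" if "z \<in> states Y lam n" for z
    using that par phiLam_nonneg irreducible_kernel_nonneg[OF assms(5) x(3)]
    unfolding g_def states_def by (auto intro!: add_nonneg_nonneg mult_nonneg_nonneg)
  have "(\<Sum>z\<in>states Y lam n - {x}. phiBar lam n phiY p al be x z)
      \<le> (\<Sum>z\<in>states Y lam n - {x}. g z)"
    using phiLam_nonneg[OF par(3,4)] irreducible_kernel_nonneg[OF assms(5) x(3)] par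
    by (intro sum_mono) (auto simp: x(1) g_def phiBar_Pair states_def)
  also have "\<dots> \<le> (\<Sum>z\<in>states Y lam n. g z)"
    using assms(1) finL g_nonneg by (intro sum_mono2) (auto simp: states_def)
  also have "\<dots> = (\<Sum>b\<in>Lam lam n. \<Sum>y'\<in>Y. g (b, y'))"
    unfolding states_def by (rule sum.cartesian_product')
  also have "\<dots> = al * (\<Sum>b\<in>Lam lam n. phiLam lam n p a b) + be * (\<Sum>y'\<in>Y. phiY y y')"
    using assms(1) finL x(2,3)
    by (simp add: g_def sum.distrib sum_distrib_left, subst sum.swap, simp)
  also have "\<dots> \<le> al * 1 + be * 1"
    using phiLam_row_sum_le_1[OF finL assms(2,3) x(2) par(3,4)]
      irreducible_kernel_row_sum[OF assms(5) x(3)] par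
    by (intro add_mono mult_left_mono) auto
  finally show ?thesis by simp
qed

lemma PiBar_pos:
  assumes "finite Y" "\<forall>i\<in>{1..n}. 0 < lam i" "x \<in> states Y lam n"
  shows "0 < PiBar Y f lam n x"
proof -
  have weight_pos: "0 < (case z of (a, y) \<Rightarrow> a powr (- f y))" if "z \<in> states Y lam n" for z
    using that assms(2) by (auto simp: states_def Lam_def)
  have "finite (states Y lam n)"
    using assms(1) by (simp add: states_def Lam_def)
  then have "0 < Zc Y f lam n"
    unfolding Zc_def using assms(3) weight_pos by (intro sum_pos) auto
  then show ?thesis
    using weight_pos[OF assms(3)] by (cases x) (auto simp: PiBar_def)
qed

lemma PMH_off_diag:
  assumes "finite Y" "\<forall>i\<in>{1..n}. 0 < lam i"
    and "valid_params p al be" "irreducible_kernel Y phiY"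
    and "x \<in> states Y lam n" "x' \<in> states Y lam n" "x \<noteq> x'"
  shows "0 \<le> PMH Y f lam n phiY p al be x x'"
    and "0 < PMH Y f lam n phiY p al be x x' \<longleftrightarrow>
           proposal_adj lam n phiY x x' \<and> proposal_adj lam n phiY x' x"
proof -
  define q where "q = phiBar lam n phiY p al be x x'"
  define q' where "q' = phiBar lam n phiY p al be x' x"
  define r where "r = q' * PiBar Y f lam n x' / (q * PiBar Y f lam n x)"
  have snd_in: "snd x \<in> Y" "snd x' \<in> Y"
    using assms(5,6) by (auto simp: states_def)
  have "0 \<le> q" "0 \<le> q'"
    unfolding q_def q'_def using phiBar_nonneg[OF assms(3,4)] snd_in by auto
  moreover have "0 < PiBar Y f lam n x" "0 < PiBar Y f lam n x'"
    using PiBar_pos[OF assms(1,2)] assms(5,6) by auto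
  ultimately have r: "0 \<le> r" "0 < r \<longleftrightarrow> 0 < q \<and> 0 < q'"
    unfolding r_def by (auto simp: zero_less_divide_iff zero_less_mult_iff mult_less_0_iff)
  have PMH: "PMH Y f lam n phiY p al be x x' = q * min 1 r"
    unfolding PMH_def AccBar_def q_def q'_def r_def using assms(7) by simp
  show "0 \<le> PMH Y f lam n phiY p al be x x'"
    unfolding PMH using \<open>0 \<le> q\<close> r(1) by simp
  have "0 < q * min 1 r \<longleftrightarrow> 0 < q \<and> 0 < q'"
    using r by (auto simp: zero_less_mult_iff)
  then show "0 < PMH Y f lam n phiY p al be x x' \<longleftrightarrow>
      proposal_adj lam n phiY x x' \<and> proposal_adj lam n phiY x' x"
    unfolding PMH q_def q'_def
    using phiBar_pos_iff[OF assms(3,7)] phiBar_pos_iff[OF assms(3) assms(7)[symmetric]] by simp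
qed

lemma PMH_diag_pos:
  assumes "finite Y" "inj_on lam {1..n}" "2 \<le> n"
    and "valid_params p al be" "irreducible_kernel Y phiY" "x \<in> states Y lam n"
  shows "0 < PMH Y f lam n phiY p al be x x"
proof -
  have "(\<Sum>z\<in>states Y lam n - {x}.
          phiBar lam n phiY p al be x z * AccBar Y f lam n phiY p al be x z)
      \<le> (\<Sum>z\<in>states Y lam n - {x}. phiBar lam n phiY p al be x z)"
    using phiBar_nonneg[OF assms(4,5)] assms(6)
    by (intro sum_mono mult_left_le) (auto simp: AccBar_def states_def)
  also have "\<dots> \<le> al + be"
    by (rule phiBar_row_sum_off_diag_le[OF assms])
  also have "\<dots> < 1"
    using assms(4) by (simp add: valid_params_def)
  finally show ?thesis
    by (simp add: PMH_def)
qed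

definition mh_adj :: "(nat \<Rightarrow> real) \<Rightarrow> nat \<Rightarrow> ('y \<Rightarrow> 'y \<Rightarrow> real) \<Rightarrow> real \<times> 'y \<Rightarrow> real \<times> 'y \<Rightarrow> bool" where
  "mh_adj lam n phiY x x' \<longleftrightarrow>
     x = x' \<or> proposal_adj lam n phiY x x' \<and> proposal_adj lam n phiY x' x"

lemma PMH_nonneg_and_pos_iff:
  assumes "finite Y" "\<forall>i\<in>{1..n}. 0 < lam i" "inj_on lam {1..n}" "2 \<le> n"
    and "valid_params p al be" "irreducible_kernel Y phiY"
    and "x \<in> states Y lam n" "x' \<in> states Y lam n"
  shows "0 \<le> PMH Y f lam n phiY p al be x x' \<and>
    (0 < PMH Y f lam n phiY p al be x x' \<longleftrightarrow> mh_adj lam n phiY x x')"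
proof (cases "x = x'")
  case True
  then show ?thesis
    using PMH_diag_pos[OF assms(1,3-7)] by (simp add: mh_adj_def less_imp_le)
next
  case False
  then show ?thesis
    using PMH_off_diag[OF assms(1,2,5-8) False] by (simp add: mh_adj_def)
qed

lemma successively_iff_zip_tl:
  "successively R xs \<longleftrightarrow> (\<forall>(x, y) \<in> set (zip xs (tl xs)). R x y)"
  by (induction xs rule: induct_list012) auto

lemma prod_list_pos_iff:
  fixes xs :: "'a :: linordered_semidom list"
  assumes "\<And>x. x \<in> set xs \<Longrightarrow> 0 \<le> x"
  shows "0 < prod_list xs \<longleftrightarrow> (\<forall>x \<in> set xs. 0 < x)"
  using assms prod_list_nonneg[of xs] prod_list_zero_iff[of xs]
  by (auto simp: order_less_le)

lemma path_prob_pos_iff: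
  assumes "finite Y" "\<forall>i\<in>{1..n}. 0 < lam i" "inj_on lam {1..n}" "2 \<le> n"
    and "valid_params p al be" "irreducible_kernel Y phiY" "set xs \<subseteq> states Y lam n"
  shows "0 < path_prob Y f lam n phiY p al be xs \<longleftrightarrow> successively (mh_adj lam n phiY) xs"
proof -
  have steps_in: "x \<in> states Y lam n" "x' \<in> states Y lam n" if "(x, x') \<in> set (zip xs (tl xs))" for x x'
  proof -
    have "set (tl xs) \<subseteq> set xs"
      by (cases xs) auto
    then show "x \<in> states Y lam n" "x' \<in> states Y lam n"
      using set_zip_leftD[OF that] set_zip_rightD[OF that] assms(7) by auto
  qed
  show ?thesis
    unfolding path_prob_def successively_iff_zip_tl
    using PMH_nonneg_and_pos_iff[OF assms(1-6) steps_in]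
    by (subst prod_list_pos_iff) auto
qed

theorem corollary18:
  fixes Y :: "'y set" and f :: "'y \<Rightarrow> real" and lam :: "nat \<Rightarrow> real" and n :: nat
    and phiY :: "'y \<Rightarrow> 'y \<Rightarrow> real"
    and a1' a1 b1 a2' a2 b2 :: real
  assumes "finite Y" and "Y \<noteq> {}"
    and "n \<ge> 2"
    and "\<forall>i\<in>{1..n}. lam i > 0"
    and "\<forall>i\<in>{1..n}. \<forall>j\<in>{1..n}. i < j \<longrightarrow> lam i < lam j"
    and "irreducible_kernel Y phiY"
    and "valid_params a1' a1 b1"
    and "valid_params a2' a2 b2"
  shows "pos_paths Y f lam n phiY a1' a1 b1 = pos_paths Y f lam n phiY a2' a2 b2"
proof -
  have "inj_on lam {1..n}"
    using assms(5) by (intro strict_mono_on_imp_inj_on) (auto simp: strict_mono_on_def)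
  then have "pos_paths Y f lam n phiY p al be =
      {xs. xs \<noteq> [] \<and> set xs \<subseteq> states Y lam n \<and> successively (mh_adj lam n phiY) xs}"
    if "valid_params p al be" for p al be
    using path_prob_pos_iff[OF assms(1,4) _ assms(3) that assms(6)]
    unfolding pos_paths_def by blast
  then show ?thesis
    using assms(7,8) by simp
qed

end
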